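(* Let $q\ge2$ be an integer, $\mu>0$, and let $\hat Q_\ell$ ($\ell=1,\dots,q-1$) and $\hat P$ be the $q\times q$ matrices defined in the context. Then for every $t\in\mathbb N$ and all $\ell\neq\ell'$ in $\{1,\dots,q-1\}$: $$\det(\hat I+t\hat P)=1-\mu t(t+1)\frac{q}{q-1},$$ $$\det(\hat I+t\hat Q_\ell)=1-\mu t(t-1)\frac{q-2}{q-1}-t^2\mu^2\frac{q(q-2)}{(q-1)^2},$$ $$\det(\hat I+\hat P+\hat Q_\ell)=1-\mu\frac{2q}{q-1}-\mu^2\frac{4q(q-2)}{(q-1)^2},$$ $$\det(\hat I+\hat Q_\ell+\hat Q_{\ell'})=1+\mu\frac{2}{q-1}-\mu^2\frac{(3q-1)(q-3)}{(q-1)^2}-\mu^3\frac{2q(q-3)}{(q-1)^2}.$$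
   Context: For $m=1,\dots,q-2$ and $l=1,\dots,q$: $\alpha_{m,l}=\frac{1}{\sqrt{m(m+1)}}$ if $l\le m$, $\alpha_{m,l}=\frac{-m}{\sqrt{m(m+1)}}$ if $l=m+1$, $\alpha_{m,l}=0$ if $l>m+1$. For $m=1,\dots,q$ set $\omega_{m,l}=\alpha_{m,l}$ if $m\le q-2$ and $\omega_{m,l}=0$ otherwise. For $m,m'\in\{1,\dots,q\}$: $$(\hat Q_l)_{mm'}=\mu\,\omega_{m,l}\omega_{m',l}+\sqrt\mu\sqrt{1+\mu\tfrac{q}{q-1}}\,\big[\omega_{m,l}\delta_{m',q-1}+\omega_{m',l}\delta_{m,q-1}\big],$$ and, with $c=\mu\frac{q}{q-1}$, $\hat P_{mm'}=(1+c)^{-1}\times\{c$ if $m=m'=q$; $-c(2+c)$ if $m=m'=q-1$; $\sqrt\mu\sqrt{q/(q-1)}$ if $\{m,m'\}=\{q-1,q\}$; $0$ otherwise$\}$. $\hat I$ is the $q\times q$ identity. *)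

theory Defs
  imports "Jordan_Normal_Form.Determinant"
begin

text \<open>Entries use the paper's 1-based indices m, l in 1..q; the q x q matrices
  (Jordan_Normal_Form, 0-based) have entry (i,j) equal to the paper's entry (i+1,j+1).\<close>

definition alpha :: "nat \<Rightarrow> nat \<Rightarrow> nat \<Rightarrow> real" where
  "alpha q m l = (if l \<le> m then 1 / sqrt (real m * (real m + 1))
                  else if l = m + 1 then - real m / sqrt (real m * (real m + 1))
                  else 0)"

definition omega :: "nat \<Rightarrow> nat \<Rightarrow> nat \<Rightarrow> real" where
  "omega q m l = (if 1 \<le> m \<and> m \<le> q - 2 then alpha q m l else 0)"

definition kron :: "nat \<Rightarrow> nat \<Rightarrow> real" where
  "kron a b = (if a = b then 1 else 0)"

definition Qhat_entry :: "nat \<Rightarrow> real \<Rightarrow> nat \<Rightarrow> nat \<Rightarrow> nat \<Rightarrow> real" where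
  "Qhat_entry q \<mu> l m m' =
     \<mu> * omega q m l * omega q m' l
     + sqrt \<mu> * sqrt (1 + \<mu> * (real q / (real q - 1)))
       * (omega q m l * kron m' (q - 1) + omega q m' l * kron m (q - 1))"

definition Phat_entry :: "nat \<Rightarrow> real \<Rightarrow> nat \<Rightarrow> nat \<Rightarrow> real" where
  "Phat_entry q \<mu> m m' =
     (let c = \<mu> * (real q / (real q - 1)) in
      (1 / (1 + c)) *
      (if m = q \<and> m' = q then c
       else if m = q - 1 \<and> m' = q - 1 then - c * (2 + c)
       else if (m = q - 1 \<and> m' = q) \<or> (m = q \<and> m' = q - 1)
         then sqrt \<mu> * sqrt (real q / (real q - 1))
       else 0))"

definition Qhat :: "nat \<Rightarrow> real \<Rightarrow> nat \<Rightarrow> real mat" where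
  "Qhat q \<mu> l = mat q q (\<lambda>(i, j). Qhat_entry q \<mu> l (i + 1) (j + 1))"

definition Phat :: "nat \<Rightarrow> real \<Rightarrow> real mat" where
  "Phat q \<mu> = mat q q (\<lambda>(i, j). Phat_entry q \<mu> (i + 1) (j + 1))"

end

(* Each matrix is a perturbation of the identity of rank at most three:
   Qhat_l = mu w_l w_l^T + sigma (w_l e^T + e w_l^T), where w_l = (omega_{m,l})_m and e = e_{q-1},
   while Phat is supported on the span of e_{q-1} and e_q.  Writing the perturbation as U V with
   U of size q x r, Sylvester's identity det (I_q + U V) = det (I_r + V U) turns each determinant
   into an r x r one (r <= 3) whose entries are inner products.  These are elementary: w_l vanishes
   in the last two coordinates, the rows alpha_{m,.} of a Helmert matrix give
   <w_l, w_l'> = [l = l'] - 1/(q-1), and the nonzero 2 x 2 block of Phat has trace and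
   determinant both equal to -c, where c = mu q/(q-1). *)

theory Submission
  imports Defs
begin

lemma det_mat_2:
  "det (mat 2 2 f) = f (0,0) * f (1,1) - f (0,1) * (f (1,0) :: 'a :: comm_ring_1)"
  by (subst laplace_expansion_column[where j = 0 and n = 2])
    (auto simp: cofactor_def mat_delete_def numeral_2_eq_2 det_single insert_index_def)

lemma det_mat_3:
  "det (mat 3 3 f) = (f (0,0) :: 'a :: comm_ring_1) * (f (1,1) * f (2,2) - f (1,2) * f (2,1))
     - f (1,0) * (f (0,1) * f (2,2) - f (0,2) * f (2,1))
     + f (2,0) * (f (0,1) * f (1,2) - f (0,2) * f (1,1))"
  by (subst laplace_expansion_column[where j = 0 and n = 3])
    (auto simp: cofactor_def mat_delete_def insert_index_def numeral_3_eq_3 numeral_2_eq_2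
      det_mat_2[unfolded numeral_2_eq_2] algebra_simps)

text \<open>Sylvester's determinant identity: both sides are determinants of the block matrix
  [[1, -U], [V, 1]], factored once as lower times upper and once as upper times lower triangular.\<close>
lemma det_one_plus_mult_commute:
  fixes U :: "'a :: idom mat"
  assumes U: "U \<in> carrier_mat n r" and V: "V \<in> carrier_mat r n"
  shows "det (1\<^sub>m n + U * V) = det (1\<^sub>m r + V * U)"
proof -
  let ?M = "four_block_mat (1\<^sub>m n) (-U) V (1\<^sub>m r)"
  let ?L = "four_block_mat (1\<^sub>m n) (0\<^sub>m n r) V (1\<^sub>m r)"
  have det_L: "det ?L = 1"
    by (subst det_four_block_mat_upper_right_zero[of _ n _ r]) (use V in auto)
  have M_UL: "?M = four_block_mat (1\<^sub>m n + U * V) (-U) (0\<^sub>m r n) (1\<^sub>m r) * ?L"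
    by (subst mult_four_block_mat[of _ n n _ r _ r _ _ n _ r]) (use U V in \<open>auto simp: add_mult_distrib_mat\<close>)
  have M_LU: "?M = ?L * four_block_mat (1\<^sub>m n) (-U) (0\<^sub>m r n) (1\<^sub>m r + V * U)"
    by (subst mult_four_block_mat[of _ n n _ r _ r _ _ n _ r]) (use U V in \<open>auto simp: mult_add_distrib_mat\<close>)
  have "det ?M = det (1\<^sub>m n + U * V)"
    unfolding M_UL using U V
    by (subst det_mult[of _ "n + r"], auto simp: det_L intro!: four_block_carrier_mat,
        subst det_four_block_mat_lower_left_zero[of _ n _ r], auto)
  moreover have "det ?M = det (1\<^sub>m r + V * U)"
    unfolding M_LU using U V
    by (subst det_mult[of _ "n + r"], auto simp: det_L intro!: four_block_carrier_mat,
        subst det_four_block_mat_lower_left_zero[of _ n _ r], auto)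
  ultimately show ?thesis by simp
qed

lemma mat_of_cols_mult_mat_of_rows:
  assumes "length vs = length us"
  shows "mat_of_cols n us * mat_of_rows n vs = mat n n (\<lambda>(i, j). \<Sum>k<length us. us ! k $ i * vs ! k $ j)"
  using assms by (intro eq_matI) (simp_all add: scalar_prod_def mat_of_cols_index mat_of_rows_index atLeast0LessThan)

lemma det_one_plus_smult_low_rank:
  fixes us vs :: "'a :: idom vec list"
  assumes "set us \<subseteq> carrier_vec n" "set vs \<subseteq> carrier_vec n" "length vs = length us"
  shows "det (1\<^sub>m n + t \<cdot>\<^sub>m (mat_of_cols n us * mat_of_rows n vs))
    = det (mat (length us) (length us) (\<lambda>(k, k'). (if k = k' then 1 else 0) + t * (vs ! k \<bullet> us ! k')))"
proof -
  let ?U = "mat_of_cols n us" and ?V = "t \<cdot>\<^sub>m mat_of_rows n vs"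
  have factor: "t \<cdot>\<^sub>m (mat_of_cols n us * mat_of_rows n vs) = ?U * ?V"
    by (metis assms(3) mat_of_cols_carrier(1) mat_of_rows_carrier(1) mult_smult_distrib)
  have "us ! k \<in> carrier_vec n" "vs ! k \<in> carrier_vec n" if "k < length us" for k
    using assms that nth_mem by (metis subsetD)+
  then have gram: "1\<^sub>m (length us) + ?V * ?U
      = mat (length us) (length us) (\<lambda>(k, k'). (if k = k' then 1 else 0) + t * (vs ! k \<bullet> us ! k'))"
    using assms(3) by (intro eq_matI) (auto simp: smult_scalar_prod_distrib[of _ n])
  show ?thesis
    unfolding factor gram[symmetric] using assms(3)
    by (intro det_one_plus_mult_commute) auto
qed

lemma alpha_mult_alpha:
  assumes "1 \<le> m" "l \<le> l'"
  shows "alpha q m l * alpha q m l' =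
    (if l' \<le> m then 1 / (real m * (real m + 1))
     else if l' = m + 1 then (if l = l' then real m / (real m + 1) else - 1 / (real m + 1))
     else 0)"
proof -
  have pos: "real m * (real m + 1) > 0" using assms(1) by simp
  then have sq: "sqrt (real m * (real m + 1)) * sqrt (real m * (real m + 1)) = real m * (real m + 1)"
    by simp
  show ?thesis
    using assms pos unfolding alpha_def
    by (auto simp: sq field_simps)
qed

lemma sum_alpha_mult_alpha:
  assumes "1 \<le> l" "l \<le> l'"
  shows "(\<Sum>m = 1..n. alpha q m l * alpha q m l')
    = (if n + 1 < l' then 0 else (if l = l' then 1 else 0) - 1 / (real n + 1))"
proof (induction n)
  case 0
  then show ?case using assms by simp
next
  case (Suc n)
  have step: "alpha q (Suc n) l * alpha q (Suc n) l' =
    (if l' \<le> Suc n then 1 / ((real n + 1) * (real n + 2))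
     else if l' = n + 2 then (if l = l' then 1 - 1 / (real n + 2) else - 1 / (real n + 2))
     else 0)"
    using alpha_mult_alpha[of "Suc n" l l' q] assms by (simp add: divide_simps algebra_simps)
  have telescope: "1 / (real n + 1) - 1 / ((real n + 1) * (real n + 2)) = 1 / (real n + 2)"
    by (simp add: divide_simps)
  have "(\<Sum>m = 1..Suc n. alpha q m l * alpha q m l')
      = (\<Sum>m = 1..n. alpha q m l * alpha q m l') + alpha q (Suc n) l * alpha q (Suc n) l'"
    by simp
  also have "\<dots> = (if Suc n + 1 < l' then 0 else (if l = l' then 1 else 0) - 1 / (real (Suc n) + 1))"
    unfolding Suc.IH step using assms telescope by (auto simp: algebra_simps)
  finally show ?case .
qed

definition omega_vec :: "nat \<Rightarrow> nat \<Rightarrow> real vec" where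
  "omega_vec q l = vec q (\<lambda>i. omega q (i + 1) l)"

lemma omega_vec_carrier [simp]: "omega_vec q l \<in> carrier_vec q" "dim_vec (omega_vec q l) = q"
  by (simp_all add: omega_vec_def)

lemma omega_vec_last_two [simp]:
  assumes "q > 0"
  shows "omega_vec q l $ (q - 2) = 0" "omega_vec q l $ (q - 1) = 0"
  using assms by (auto simp: omega_vec_def omega_def)

lemma inner_omega_vec:
  assumes "q \<ge> 2" "l \<in> {1..q-1}" "l' \<in> {1..q-1}"
  shows "omega_vec q l \<bullet> omega_vec q l' = (if l = l' then 1 else 0) - 1 / (real q - 1)"
proof -
  have inner_alpha: "omega_vec q l \<bullet> omega_vec q l' = (\<Sum>m = 1..q-2. alpha q m l * alpha q m l')"
    for l l'
  proof -
    have "omega_vec q l \<bullet> omega_vec q l' = (\<Sum>m = 1..q. omega q m l * omega q m l')"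
      unfolding omega_vec_def scalar_prod_def
      by (rule sum.reindex_bij_witness[of _ "\<lambda>m. m - 1" "\<lambda>i. i + 1"]) auto
    also have "\<dots> = (\<Sum>m = 1..q-2. omega q m l * omega q m l')"
      by (rule sum.mono_neutral_right) (auto simp: omega_def)
    also have "\<dots> = (\<Sum>m = 1..q-2. alpha q m l * alpha q m l')"
      by (rule sum.cong) (auto simp: omega_def)
    finally show ?thesis .
  qed
  have "real (q - 2) + 1 = real q - 1"
    using assms(1) by (simp add: of_nat_diff)
  then have ordered: "omega_vec q k \<bullet> omega_vec q k' = (if k = k' then 1 else 0) - 1 / (real q - 1)"
    if "k \<in> {1..q-1}" "k' \<in> {1..q-1}" "k \<le> k'" for k k'
    using that assms(1) sum_alpha_mult_alpha[of k k' q "q - 2"] by (simp add: inner_alpha)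
  show ?thesis
  proof (cases "l \<le> l'")
    case False
    have "omega_vec q l \<bullet> omega_vec q l' = omega_vec q l' \<bullet> omega_vec q l"
      by (rule comm_scalar_prod[of _ q]) auto
    then show ?thesis
      using False assms ordered[of l' l] by auto
  qed (use assms ordered in auto)
qed

definition kappa :: "nat \<Rightarrow> real \<Rightarrow> real" where
  "kappa q \<mu> = \<mu> * (real q / (real q - 1))"

definition sigma :: "nat \<Rightarrow> real \<Rightarrow> real" where
  "sigma q \<mu> = sqrt \<mu> * sqrt (1 + kappa q \<mu>)"

lemma kappa_nonneg: "q \<ge> 2 \<Longrightarrow> \<mu> \<ge> 0 \<Longrightarrow> kappa q \<mu> \<ge> 0"
  by (simp add: kappa_def)

lemma sigma_sq: "q \<ge> 2 \<Longrightarrow> \<mu> \<ge> 0 \<Longrightarrow> sigma q \<mu> * sigma q \<mu> = \<mu> * (1 + kappa q \<mu>)"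
  using kappa_nonneg[of q \<mu>] by (simp add: sigma_def real_sqrt_mult[symmetric])

lemma Qhat_carrier [simp]: "dim_row (Qhat q \<mu> l) = q" "dim_col (Qhat q \<mu> l) = q"
  by (simp_all add: Qhat_def)

lemma index_Qhat:
  fixes l :: nat and \<mu> :: real
  assumes "q \<ge> 2" "i < q" "j < q"
  defines "w \<equiv> omega_vec q l" and "e \<equiv> unit_vec q (q - 2)"
  shows "Qhat q \<mu> l $$ (i, j) = \<mu> * w $ i * w $ j + sigma q \<mu> * (w $ i * e $ j + w $ j * e $ i)"
  using assms by (auto simp: Qhat_def Qhat_entry_def kron_def omega_vec_def sigma_def kappa_def)

lemma Qhat_eq_low_rank:
  fixes l :: nat and \<mu> :: real
  assumes "q \<ge> 2"
  defines "w \<equiv> omega_vec q l" and "e \<equiv> unit_vec q (q - 2)" and "s \<equiv> sigma q \<mu>"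
  shows "Qhat q \<mu> l = mat_of_cols q [w, e] * mat_of_rows q [\<mu> \<cdot>\<^sub>v w + s \<cdot>\<^sub>v e, s \<cdot>\<^sub>v w]"
  by (subst mat_of_cols_mult_mat_of_rows)
    (auto intro!: eq_matI simp: index_Qhat[OF assms(1)] numeral_2_eq_2 w_def e_def s_def algebra_simps)

lemma det_one_plus_smult_Qhat:
  fixes l :: nat and t :: real
  assumes "q \<ge> 2" "\<mu> \<ge> 0" "l \<in> {1..q-1}"
  shows "det (1\<^sub>m q + t \<cdot>\<^sub>m Qhat q \<mu> l)
    = 1 - \<mu> * t * (t - 1) * ((real q - 2) / (real q - 1))
        - t^2 * \<mu>^2 * (real q * (real q - 2) / (real q - 1)^2)"
proof -
  let ?w = "omega_vec q l" and ?e = "unit_vec q (q - 2) :: real vec" and ?s = "sigma q \<mu>"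
  let ?A = "1 - 1 / (real q - 1)"
  have ww: "?w \<bullet> ?w = ?A"
    using inner_omega_vec[OF assms(1) assms(3) assms(3)] by simp
  have "det (1\<^sub>m q + t \<cdot>\<^sub>m Qhat q \<mu> l)
      = det (mat 2 2 (\<lambda>(k, k'). (if k = k' then 1 else 0)
          + t * ([\<mu> \<cdot>\<^sub>v ?w + ?s \<cdot>\<^sub>v ?e, ?s \<cdot>\<^sub>v ?w] ! k \<bullet> [?w, ?e] ! k')))"
    unfolding Qhat_eq_low_rank[OF assms(1)]
    by (subst det_one_plus_smult_low_rank) (auto simp: numeral_2_eq_2)
  also have "\<dots> = 1 + t * \<mu> * ?A - t^2 * (?s * ?s) * ?A"
    using assms(1)
    by (simp add: det_mat_2 ww add_scalar_prod_distrib[of _ q] smult_scalar_prod_distrib[of _ q]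
        algebra_simps power2_eq_square)
  also have "\<dots> = 1 - \<mu> * t * (t - 1) * ((real q - 2) / (real q - 1))
      - t^2 * \<mu>^2 * (real q * (real q - 2) / (real q - 1)^2)"
  proof -
    \<comment> \<open>with q = d + 1 the simplifier clears the denominators d and d^2 without expanding them\<close>
    obtain d where d: "real q = d + 1" "d \<noteq> 0"
      using assms(1) by (intro that[of "real q - 1"]) auto
    show ?thesis
      unfolding sigma_sq[OF assms(1,2)] kappa_def d(1) using d(2) by (simp add: field_simps power2_eq_square)
  qed
  finally show ?thesis .
qed

lemma Phat_carrier [simp]: "dim_row (Phat q \<mu>) = q" "dim_col (Phat q \<mu>) = q"
  by (simp_all add: Phat_def)

lemma index_Phat:
  fixes \<mu> :: real
  assumes "q \<ge> 2" "i < q" "j < q"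
  defines "P \<equiv> Phat q \<mu>" and "e \<equiv> unit_vec q (q - 2)" and "f \<equiv> unit_vec q (q - 1)"
  shows "P $$ (i, j) = e $ i * (P $$ (q - 2, q - 2) * e $ j + P $$ (q - 2, q - 1) * f $ j)
                     + f $ i * (P $$ (q - 1, q - 2) * e $ j + P $$ (q - 1, q - 1) * f $ j)"
proof -
  obtain a where q: "q = Suc (Suc a)"
    using assms(1) by (metis add_2_eq_Suc le_Suc_ex)
  show ?thesis
    using assms(2,3) unfolding P_def e_def f_def q by (auto simp: Phat_def Phat_entry_def Let_def)
qed

lemma Phat_eq_low_rank:
  fixes \<mu> :: real
  assumes "q \<ge> 2"
  defines "P \<equiv> Phat q \<mu>" and "e \<equiv> unit_vec q (q - 2)" and "f \<equiv> unit_vec q (q - 1)"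
  shows "P = mat_of_cols q [e, f] * mat_of_rows q
    [P $$ (q - 2, q - 2) \<cdot>\<^sub>v e + P $$ (q - 2, q - 1) \<cdot>\<^sub>v f,
     P $$ (q - 1, q - 2) \<cdot>\<^sub>v e + P $$ (q - 1, q - 1) \<cdot>\<^sub>v f]" (is "P = ?M")
proof (rule eq_matI)
  fix i j
  assume "i < dim_row ?M" and "j < dim_col ?M"
  then have "i < q" "j < q" by simp_all
  then show "P $$ (i, j) = ?M $$ (i, j)"
    unfolding P_def e_def f_def index_Phat[OF assms(1) \<open>i < q\<close> \<open>j < q\<close>]
    by (simp add: mat_of_cols_mult_mat_of_rows numeral_2_eq_2 algebra_simps)
qed (simp_all add: P_def)

lemma Phat_last_block:
  assumes "q \<ge> 2" "\<mu> \<ge> 0"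
  defines "P \<equiv> Phat q \<mu>" and "c \<equiv> kappa q \<mu>"
  shows "P $$ (q - 2, q - 2) + P $$ (q - 1, q - 1) = - c"
    and "P $$ (q - 2, q - 2) * P $$ (q - 1, q - 1) - P $$ (q - 2, q - 1) * P $$ (q - 1, q - 2) = - c"
    and "P $$ (q - 1, q - 1) = c / (1 + c)"
proof -
  let ?r = "sqrt \<mu> * sqrt (real q / (real q - 1))"
  have r_sq: "?r * ?r = c"
    using assms(1,2) by (simp add: c_def kappa_def real_sqrt_mult[symmetric])
  have c_pos: "1 + c > 0"
    using kappa_nonneg[OF assms(1,2)] by (simp add: c_def)
  have P: "P $$ (q - 2, q - 2) = - c * (2 + c) / (1 + c)" "P $$ (q - 1, q - 1) = c / (1 + c)"
    "P $$ (q - 2, q - 1) = ?r / (1 + c)" "P $$ (q - 1, q - 2) = ?r / (1 + c)"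
    using assms(1) by (auto simp: P_def c_def kappa_def Phat_def Phat_entry_def Let_def)
  have "P $$ (q - 2, q - 2) + P $$ (q - 1, q - 1) = - c * (1 + c) / (1 + c)"
    unfolding P by (simp add: add_divide_distrib[symmetric] algebra_simps)
  then show "P $$ (q - 2, q - 2) + P $$ (q - 1, q - 1) = - c"
    using c_pos by simp
  have "P $$ (q - 2, q - 2) * P $$ (q - 1, q - 1) - P $$ (q - 2, q - 1) * P $$ (q - 1, q - 2)
      = (- c * (2 + c) * c - ?r * ?r) / ((1 + c) * (1 + c))"
    unfolding P by (simp add: times_divide_times_eq diff_divide_distrib)
  also have "\<dots> = - c * ((1 + c) * (1 + c)) / ((1 + c) * (1 + c))"
    unfolding r_sq by (simp add: algebra_simps)
  finally show "P $$ (q - 2, q - 2) * P $$ (q - 1, q - 1) - P $$ (q - 2, q - 1) * P $$ (q - 1, q - 2) = - c"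
    using c_pos by simp
  show "P $$ (q - 1, q - 1) = c / (1 + c)"
    by (fact P(2))
qed

lemma det_one_plus_smult_Phat:
  fixes t :: real
  assumes "q \<ge> 2" "\<mu> \<ge> 0"
  shows "det (1\<^sub>m q + t \<cdot>\<^sub>m Phat q \<mu>) = 1 - \<mu> * t * (t + 1) * (real q / (real q - 1))"
proof -
  let ?P = "Phat q \<mu>" and ?e = "unit_vec q (q - 2) :: real vec" and ?f = "unit_vec q (q - 1) :: real vec"
  let ?a = "?P $$ (q - 2, q - 2)" and ?b = "?P $$ (q - 2, q - 1)"
    and ?c = "?P $$ (q - 1, q - 2)" and ?d = "?P $$ (q - 1, q - 1)"
  have "det (1\<^sub>m q + t \<cdot>\<^sub>m ?P)
      = det (mat 2 2 (\<lambda>(k, k'). (if k = k' then 1 else 0)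
          + t * ([?a \<cdot>\<^sub>v ?e + ?b \<cdot>\<^sub>v ?f, ?c \<cdot>\<^sub>v ?e + ?d \<cdot>\<^sub>v ?f] ! k \<bullet> [?e, ?f] ! k')))"
    by (subst Phat_eq_low_rank[OF assms(1)], subst det_one_plus_smult_low_rank) (auto simp: numeral_2_eq_2)
  also have "\<dots> = 1 + t * (?a + ?d) + t^2 * (?a * ?d - ?b * ?c)"
    using assms(1)
    by (simp add: det_mat_2 add_scalar_prod_distrib[of _ q] algebra_simps power2_eq_square)
  also have "\<dots> = 1 - \<mu> * t * (t + 1) * (real q / (real q - 1))"
    unfolding Phat_last_block(1,2)[OF assms] by (simp add: kappa_def algebra_simps power2_eq_square)
  finally show ?thesis .
qed

lemma Phat_add_Qhat_eq_low_rank: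
  fixes l :: nat and \<mu> :: real
  assumes "q \<ge> 2"
  defines "P \<equiv> Phat q \<mu>" and "w \<equiv> omega_vec q l" and "s \<equiv> sigma q \<mu>"
    and "e \<equiv> unit_vec q (q - 2)" and "f \<equiv> unit_vec q (q - 1)"
  shows "P + Qhat q \<mu> l = mat_of_cols q [w, e, f] * mat_of_rows q
    [\<mu> \<cdot>\<^sub>v w + s \<cdot>\<^sub>v e,
     s \<cdot>\<^sub>v w + P $$ (q - 2, q - 2) \<cdot>\<^sub>v e + P $$ (q - 2, q - 1) \<cdot>\<^sub>v f,
     P $$ (q - 1, q - 2) \<cdot>\<^sub>v e + P $$ (q - 1, q - 1) \<cdot>\<^sub>v f]" (is "_ = ?M")
proof (rule eq_matI)
  fix i j
  assume "i < dim_row ?M" and "j < dim_col ?M"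
  then have "i < q" "j < q" by simp_all
  then have "(P + Qhat q \<mu> l) $$ (i, j) = P $$ (i, j) + Qhat q \<mu> l $$ (i, j)"
    by (simp add: P_def)
  also have "\<dots> = ?M $$ (i, j)"
    unfolding P_def w_def s_def e_def f_def index_Phat[OF assms(1) \<open>i < q\<close> \<open>j < q\<close>]
    using assms(1) \<open>i < q\<close> \<open>j < q\<close>
    by (simp add: index_Qhat[OF assms(1)] mat_of_cols_mult_mat_of_rows numeral_3_eq_3 algebra_simps)
  finally show "(P + Qhat q \<mu> l) $$ (i, j) = ?M $$ (i, j)" .
qed (simp_all add: P_def)

lemma Qhat_add_Qhat_eq_low_rank:
  fixes l l' :: nat and \<mu> :: real
  assumes "q \<ge> 2"
  defines "w \<equiv> omega_vec q l" and "w' \<equiv> omega_vec q l'" and "s \<equiv> sigma q \<mu>"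
    and "e \<equiv> unit_vec q (q - 2)"
  shows "Qhat q \<mu> l + Qhat q \<mu> l' = mat_of_cols q [w, w', e] * mat_of_rows q
    [\<mu> \<cdot>\<^sub>v w + s \<cdot>\<^sub>v e, \<mu> \<cdot>\<^sub>v w' + s \<cdot>\<^sub>v e, s \<cdot>\<^sub>v w + s \<cdot>\<^sub>v w']"
  by (subst mat_of_cols_mult_mat_of_rows)
    (auto intro!: eq_matI simp: index_Qhat[OF assms(1)] numeral_3_eq_3 w_def w'_def e_def s_def
      algebra_simps)

lemma det_one_plus_Phat_add_Qhat:
  assumes "q \<ge> 2" "\<mu> \<ge> 0" "l \<in> {1..q-1}"
  shows "det (1\<^sub>m q + Phat q \<mu> + Qhat q \<mu> l)
    = 1 - \<mu> * (2 * real q / (real q - 1)) - \<mu>^2 * (4 * real q * (real q - 2) / (real q - 1)^2)"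
proof -
  let ?P = "Phat q \<mu>" and ?w = "omega_vec q l" and ?s = "sigma q \<mu>"
    and ?e = "unit_vec q (q - 2) :: real vec" and ?f = "unit_vec q (q - 1) :: real vec"
  let ?a = "?P $$ (q - 2, q - 2)" and ?b = "?P $$ (q - 2, q - 1)"
    and ?c = "?P $$ (q - 1, q - 2)" and ?d = "?P $$ (q - 1, q - 1)"
  let ?A = "1 - 1 / (real q - 1)" and ?\<kappa> = "kappa q \<mu>"
  have ww: "?w \<bullet> ?w = ?A"
    using inner_omega_vec[OF assms(1) assms(3) assms(3)] by simp
  have "q - 1 \<noteq> q - 2"
    using assms(1) by simp
  have "1\<^sub>m q + ?P + Qhat q \<mu> l = 1\<^sub>m q + 1 \<cdot>\<^sub>m (?P + Qhat q \<mu> l)"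
    by (intro eq_matI) auto
  then have "det (1\<^sub>m q + ?P + Qhat q \<mu> l)
      = det (mat 3 3 (\<lambda>(k, k'). (if k = k' then 1 else 0)
          + 1 * ([\<mu> \<cdot>\<^sub>v ?w + ?s \<cdot>\<^sub>v ?e, ?s \<cdot>\<^sub>v ?w + ?a \<cdot>\<^sub>v ?e + ?b \<cdot>\<^sub>v ?f, ?c \<cdot>\<^sub>v ?e + ?d \<cdot>\<^sub>v ?f] ! k
                  \<bullet> [?w, ?e, ?f] ! k')))"
    by (simp only: Phat_add_Qhat_eq_low_rank[OF assms(1)], subst det_one_plus_smult_low_rank)
      (auto simp: numeral_3_eq_3)
  also have "\<dots> = (1 + \<mu> * ?A) * (1 + (?a + ?d) + (?a * ?d - ?b * ?c)) - ?A * (?s * ?s * (1 + ?d))"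
    using assms(1) omega_vec_last_two[of q l] \<open>q - 1 \<noteq> q - 2\<close>
    by (simp add: det_mat_3 ww add_scalar_prod_distrib[of _ q] smult_scalar_prod_distrib[of _ q]
        algebra_simps)
  also have "\<dots> = (1 + \<mu> * ?A) * (1 - 2 * ?\<kappa>) - ?A * (\<mu> * (1 + 2 * ?\<kappa>))"
  proof -
    have "1 + (?a + ?d) + (?a * ?d - ?b * ?c) = 1 - 2 * ?\<kappa>"
      unfolding Phat_last_block(1,2)[OF assms(1,2)] by simp
    moreover have "?s * ?s * (1 + ?d) = \<mu> * (1 + 2 * ?\<kappa>)"
      using kappa_nonneg[OF assms(1,2)]
      unfolding Phat_last_block(3)[OF assms(1,2)] sigma_sq[OF assms(1,2)] by (simp add: field_simps)
    ultimately show ?thesis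
      by (simp only:)
  qed
  also have "\<dots> = 1 - \<mu> * (2 * real q / (real q - 1)) - \<mu>^2 * (4 * real q * (real q - 2) / (real q - 1)^2)"
  proof -
    obtain d where d: "real q = d + 1" "d \<noteq> 0"
      using assms(1) by (intro that[of "real q - 1"]) auto
    show ?thesis
      unfolding kappa_def d(1) using d(2) by (simp add: field_simps power2_eq_square)
  qed
  finally show ?thesis .
qed

lemma det_one_plus_Qhat_add_Qhat:
  assumes "q \<ge> 2" "\<mu> \<ge> 0" "l \<in> {1..q-1}" "l' \<in> {1..q-1}" "l \<noteq> l'"
  shows "det (1\<^sub>m q + Qhat q \<mu> l + Qhat q \<mu> l')
    = 1 + \<mu> * (2 / (real q - 1)) - \<mu>^2 * ((3 * real q - 1) * (real q - 3) / (real q - 1)^2)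
        - \<mu>^3 * (2 * real q * (real q - 3) / (real q - 1)^2)"
proof -
  let ?w = "omega_vec q l" and ?w' = "omega_vec q l'" and ?s = "sigma q \<mu>"
    and ?e = "unit_vec q (q - 2) :: real vec"
  let ?A = "1 - 1 / (real q - 1)" and ?B = "- 1 / (real q - 1)"
  have inner: "?w \<bullet> ?w = ?A" "?w' \<bullet> ?w' = ?A" "?w \<bullet> ?w' = ?B" "?w' \<bullet> ?w = ?B"
    using assms(5) inner_omega_vec[OF assms(1) assms(3) assms(3)] inner_omega_vec[OF assms(1) assms(4) assms(4)]
      inner_omega_vec[OF assms(1) assms(3) assms(4)] inner_omega_vec[OF assms(1) assms(4) assms(3)]
    by simp_all
  have "1\<^sub>m q + Qhat q \<mu> l + Qhat q \<mu> l' = 1\<^sub>m q + 1 \<cdot>\<^sub>m (Qhat q \<mu> l + Qhat q \<mu> l')"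
    by (intro eq_matI) auto
  then have "det (1\<^sub>m q + Qhat q \<mu> l + Qhat q \<mu> l')
      = det (mat 3 3 (\<lambda>(k, k'). (if k = k' then 1 else 0)
          + 1 * ([\<mu> \<cdot>\<^sub>v ?w + ?s \<cdot>\<^sub>v ?e, \<mu> \<cdot>\<^sub>v ?w' + ?s \<cdot>\<^sub>v ?e, ?s \<cdot>\<^sub>v ?w + ?s \<cdot>\<^sub>v ?w'] ! k
                  \<bullet> [?w, ?w', ?e] ! k')))"
    by (simp only: Qhat_add_Qhat_eq_low_rank[OF assms(1)], subst det_one_plus_smult_low_rank)
      (auto simp: numeral_3_eq_3)
  also have "\<dots> = (1 + \<mu> * ?A) * ((1 + \<mu> * ?A) - ?s * ?s * (?A + ?B))
      - \<mu> * ?B * (\<mu> * ?B - ?s * ?s * (?A + ?B)) + ?s * ?s * (?A + ?B) * (\<mu> * ?B - (1 + \<mu> * ?A))"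
    using assms(1)
    by (simp add: det_mat_3 inner add_scalar_prod_distrib[of _ q] smult_scalar_prod_distrib[of _ q]
        algebra_simps)
  also have "\<dots> = 1 + \<mu> * (2 / (real q - 1)) - \<mu>^2 * ((3 * real q - 1) * (real q - 3) / (real q - 1)^2)
        - \<mu>^3 * (2 * real q * (real q - 3) / (real q - 1)^2)"
  proof -
    obtain d where d: "real q = d + 1" "d \<noteq> 0"
      using assms(1) by (intro that[of "real q - 1"]) auto
    show ?thesis
      unfolding sigma_sq[OF assms(1,2)] kappa_def d(1) using d(2)
      by (simp add: field_simps power2_eq_square power3_eq_cube)
  qed
  finally show ?thesis .
qed

theorem proposition1:
  fixes q :: nat and \<mu> :: real
  assumes "q \<ge> 2" and "\<mu> > 0"
  shows "(\<forall>t::nat. det (1\<^sub>m q + real t \<cdot>\<^sub>m Phat q \<mu>)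
              = 1 - \<mu> * real t * (real t + 1) * (real q / (real q - 1)))
    \<and> (\<forall>t::nat. \<forall>l\<in>{1..q-1}. det (1\<^sub>m q + real t \<cdot>\<^sub>m Qhat q \<mu> l)
              = 1 - \<mu> * real t * (real t - 1) * ((real q - 2) / (real q - 1))
                  - (real t)^2 * \<mu>^2 * (real q * (real q - 2) / (real q - 1)^2))
    \<and> (\<forall>l\<in>{1..q-1}. det (1\<^sub>m q + Phat q \<mu> + Qhat q \<mu> l)
              = 1 - \<mu> * (2 * real q / (real q - 1))
                  - \<mu>^2 * (4 * real q * (real q - 2) / (real q - 1)^2))
    \<and> (\<forall>l\<in>{1..q-1}. \<forall>l'\<in>{1..q-1}. l \<noteq> l' \<longrightarrow>
          det (1\<^sub>m q + Qhat q \<mu> l + Qhat q \<mu> l')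
              = 1 + \<mu> * (2 / (real q - 1))
                  - \<mu>^2 * ((3 * real q - 1) * (real q - 3) / (real q - 1)^2)
                  - \<mu>^3 * (2 * real q * (real q - 3) / (real q - 1)^2))"
proof -
  have "\<mu> \<ge> 0"
    using assms(2) by simp
  then show ?thesis
    by (simp add: det_one_plus_smult_Phat[OF assms(1)] det_one_plus_smult_Qhat[OF assms(1)]
        det_one_plus_Phat_add_Qhat[OF assms(1)] det_one_plus_Qhat_add_Qhat[OF assms(1)])
qed

end
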